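(* Let $d\ge2$ and let $\mathcal T_d=(t_{i-j})_{0\le i,j\le d-1}$ be a complex Toeplitz matrix which is invertible, and assume that $\mathcal T_{d-1}=(t_{i-j})_{0\le i,j\le d-2}$ is singular. For $\gamma,\delta\in\mathbb C$ let $$\mathcal T_{d+1}=\begin{pmatrix}\mathcal T_d & (\gamma,t_{-d+1},\dots,t_{-1})^T\\ (\delta,t_{d-1},\dots,t_1)& t_0\end{pmatrix}.$$ Let $\mathbf V_-=(0,t_{-d+1},\dots,t_{-1})^T$, $\mathbf V_+=(0,t_{d-1},\dots,t_1)^T$ and $\mathbf e_0=(1,0,\dots,0)^T$ in $\mathbb C^d$. Then $$\det(\mathcal T_{d+1})=-\det(\mathcal T_d)\big(\gamma\,\mathbf V_+^T\mathcal T_d^{-1}\mathbf e_0+\delta\,\mathbf e_0^T\mathcal T_d^{-1}\mathbf V_-+\mathbf V_+^T\mathcal T_d^{-1}\mathbf V_--t_0\big),$$ and neither $\mathbf V_+^T\mathcal T_d^{-1}\mathbf e_0$ nor $\mathbf e_0^T\mathcal T_d^{-1}\mathbf V_-$ is zero. *)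

theory Defs
  imports "Jordan_Normal_Form.Determinant" "Jordan_Normal_Form.Matrix"
begin

definition toeplitz :: "nat \<Rightarrow> (int \<Rightarrow> 'a) \<Rightarrow> 'a mat" where
  "toeplitz n t = mat n n (\<lambda>(i,j). t (int i - int j))"

definition bordered_toeplitz :: "nat \<Rightarrow> (int \<Rightarrow> 'a) \<Rightarrow> 'a \<Rightarrow> 'a \<Rightarrow> 'a mat" where
  "bordered_toeplitz d t \<gamma> \<delta> = mat (d+1) (d+1) (\<lambda>(i,j).
     if i = 0 \<and> j = d then \<gamma> else if i = d \<and> j = 0 then \<delta> else t (int i - int j))"

definition V_minus :: "nat \<Rightarrow> (int \<Rightarrow> 'a::zero) \<Rightarrow> 'a vec" where
  "V_minus d t = vec d (\<lambda>i. if i = 0 then 0 else t (int i - int d))"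

definition V_plus :: "nat \<Rightarrow> (int \<Rightarrow> 'a::zero) \<Rightarrow> 'a vec" where
  "V_plus d t = vec d (\<lambda>i. if i = 0 then 0 else t (int d - int i))"

end

theory Submission
  imports Defs
begin

(* The determinant formula is the Schur complement expansion of the bordered matrix with respect
   to its leading block T_d. The product of the two corner entries gamma and delta would contribute
   gamma * delta * (T_d^-1)_00, but by Cramer's rule (T_d^-1)_00 = det T_(d-1) / det T_d = 0.

   For the non-vanishing, let x = T_d^-1 e_0, so that x_0 = 0. Shifting the entries of x up by one
   position gives a vector y with (T_d y)_i = (T_d x)_(i+1) = 0 for i < d - 1 and
   (T_d y)_(d-1) = V_+ . x. Hence V_+ . x = 0 would put y, and with it x, into the kernel of T_d.
   Transposition turns T_d into the Toeplitz matrix of k -> t_(-k) and V_- into its V_+, which gives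
   the claim for e_0 . T_d^-1 V_-. *)

lemma det_four_block_mat_schur_complement:
  fixes A :: "'a :: idom mat"
  assumes A: "A \<in> carrier_mat n n" and Ai: "Ai \<in> carrier_mat n n" and inv: "A * Ai = 1\<^sub>m n"
    and B: "B \<in> carrier_mat n m" and C: "C \<in> carrier_mat m n" and D: "D \<in> carrier_mat m m"
  shows "det (four_block_mat A B C D) = det A * det (D - C * (Ai * B))"
proof -
  have AiB: "- (Ai * B) \<in> carrier_mat n m" using Ai B by simp
  define E where "E = four_block_mat (1\<^sub>m n) (- (Ai * B)) (0\<^sub>m m n) (1\<^sub>m m)"
  have E: "E \<in> carrier_mat (n + m) (n + m)"
    unfolding E_def by (rule four_block_carrier_mat[OF one_carrier_mat one_carrier_mat])
  have det_E: "det E = 1"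
    unfolding E_def using det_four_block_mat_lower_left_zero[OF one_carrier_mat AiB refl one_carrier_mat]
    by simp
  have "A * (Ai * B) = (A * Ai) * B" using A Ai B by (simp add: assoc_mult_mat)
  also have "\<dots> = B" using inv B by simp
  finally have AAiB: "A * (Ai * B) = B" .
  have "four_block_mat A B C D * E = four_block_mat A (0\<^sub>m n m) C (D - C * (Ai * B))"
  proof -
    have "A * - (Ai * B) + B * 1\<^sub>m m = 0\<^sub>m n m"
      using A Ai B AAiB by (simp add: uminus_mult_right_mat)
    moreover have "C * - (Ai * B) + D * 1\<^sub>m m = D - C * (Ai * B)"
      using Ai B C D by (simp add: uminus_mult_right_mat minus_add_uminus_mat[of D m m] comm_add_mat[of _ m m])
    ultimately show ?thesis
      unfolding E_def using A B C D
      by (simp add: mult_four_block_mat[OF A B C D one_carrier_mat AiB zero_carrier_mat one_carrier_mat])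
  qed
  then have "det (four_block_mat A B C D * E) = det A * det (D - C * (Ai * B))"
    using Ai B C by (simp add: det_four_block_mat_upper_right_zero[OF A refl C] minus_carrier_mat)
  then show ?thesis using det_E by (simp add: det_mult[OF four_block_carrier_mat[OF A D] E])
qed

lemma left_inverse_imp_det_non_zero:
  fixes A :: "'a :: comm_ring_1 mat"
  assumes A: "A \<in> carrier_mat n n" and B: "B \<in> carrier_mat n n" and inv: "B * A = 1\<^sub>m n"
  shows "det A \<noteq> 0"
  using arg_cong[OF inv, of det] by (auto simp: det_mult[OF B A])

lemma inverse_mat_index_cofactor:
  fixes A :: "'a :: comm_ring_1 mat"
  assumes A: "A \<in> carrier_mat n n" and B: "B \<in> carrier_mat n n" and inv: "B * A = 1\<^sub>m n"
    and "i < n" "j < n"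
  shows "det A * B $$ (i, j) = cofactor A j i"
proof -
  have adj: "adj_mat A \<in> carrier_mat n n" using adj_mat(1)[OF A] .
  have "adj_mat A = (B * A) * adj_mat A" using inv adj by simp
  also have "\<dots> = B * (det A \<cdot>\<^sub>m 1\<^sub>m n)" using A B adj adj_mat(2)[OF A] by simp
  also have "\<dots> = det A \<cdot>\<^sub>m B" using B by (simp add: mult_smult_distrib[OF B one_carrier_mat])
  finally have "adj_mat A $$ (i, j) = (det A \<cdot>\<^sub>m B) $$ (i, j)" by simp
  then show ?thesis using assms(4,5) A B by (simp add: adj_mat_def)
qed

lemma det_bordered_mat:
  fixes A :: "'a :: idom mat"
  assumes A: "A \<in> carrier_mat n n" and Ai: "Ai \<in> carrier_mat n n" and inv: "A * Ai = 1\<^sub>m n"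
    and u: "u \<in> carrier_vec n" and w: "w \<in> carrier_vec n"
  shows "det (four_block_mat A (mat_of_cols n [u]) (mat_of_rows n [w]) (mat 1 1 (\<lambda>_. c)))
    = det A * (c - w \<bullet> (Ai *\<^sub>v u))"
proof -
  let ?S = "mat 1 1 (\<lambda>_. c) - mat_of_rows n [w] * (Ai * mat_of_cols n [u])"
  have S: "?S \<in> carrier_mat 1 1"
    using minus_carrier_mat[OF mult_carrier_mat[OF mat_of_rows_carrier(1)[of n "[w]"]
        mult_carrier_mat[OF Ai mat_of_cols_carrier(1)[of n "[u]"]]], of "mat 1 1 (\<lambda>_. c)"]
    by simp
  have "det ?S = ?S $$ (0, 0)" by (rule det_single[OF S])
  also have "\<dots> = c - w \<bullet> (Ai *\<^sub>v u)"
    using Ai u w by (simp add: mat_vec_as_mat_mat_mult[OF Ai u])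
  finally have "det ?S = c - w \<bullet> (Ai *\<^sub>v u)" .
  moreover have "det (four_block_mat A (mat_of_cols n [u]) (mat_of_rows n [w]) (mat 1 1 (\<lambda>_. c)))
      = det A * det ?S"
    using mat_of_cols_carrier(1)[of n "[u]"] mat_of_rows_carrier(1)[of n "[w]"]
    by (intro det_four_block_mat_schur_complement[OF A Ai inv, where m = 1]) simp_all
  ultimately show ?thesis by simp
qed

lemma toeplitz_carrier_mat [simp]: "toeplitz n t \<in> carrier_mat n n"
  by (simp add: toeplitz_def)

lemma dim_toeplitz [simp]: "dim_row (toeplitz n t) = n" "dim_col (toeplitz n t) = n"
  by (simp_all add: toeplitz_def)

lemma index_toeplitz [simp]: "i < n \<Longrightarrow> j < n \<Longrightarrow> toeplitz n t $$ (i, j) = t (int i - int j)"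
  by (simp add: toeplitz_def)

lemma mat_delete_toeplitz: "mat_delete (toeplitz (Suc n) t) 0 0 = toeplitz n t"
  by (rule eq_matI) (auto simp: mat_delete_def)

lemma transpose_toeplitz: "transpose_mat (toeplitz n t) = toeplitz n (\<lambda>k. t (- k))"
  by (rule eq_matI) auto

lemma V_minus_eq_V_plus: "V_minus n t = V_plus n (\<lambda>k. t (- k))"
  by (rule eq_vecI) (simp_all add: V_minus_def V_plus_def)

lemma V_plus_carrier_vec [simp]: "V_plus n t \<in> carrier_vec n"
  by (simp add: V_plus_def)

lemma V_minus_carrier_vec [simp]: "V_minus n t \<in> carrier_vec n"
  by (simp add: V_minus_def)

lemma toeplitz_inverse_corner:
  assumes "Tinv \<in> carrier_mat (Suc n) (Suc n)" and "Tinv * toeplitz (Suc n) t = 1\<^sub>m (Suc n)"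
  shows "det (toeplitz (Suc n) t) * Tinv $$ (0, 0) = det (toeplitz n t)"
  using inverse_mat_index_cofactor[OF toeplitz_carrier_mat assms]
  by (simp add: cofactor_def mat_delete_toeplitz)

definition shift_vec :: "'a :: zero vec \<Rightarrow> 'a vec" where
  "shift_vec x = vec (dim_vec x) (\<lambda>i. if Suc i < dim_vec x then x $ Suc i else 0)"

lemma toeplitz_mult_shift_vec:
  fixes t :: "int \<Rightarrow> 'a :: semiring_0"
  assumes x: "x \<in> carrier_vec n" and x0: "x $ 0 = 0" and i: "i < n"
  shows "(toeplitz n t *\<^sub>v shift_vec x) $ i
    = (if Suc i < n then (toeplitz n t *\<^sub>v x) $ Suc i else V_plus n t \<bullet> x)"
proof -
  obtain m where n: "n = Suc m" using i by (cases n) auto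
  have "(toeplitz n t *\<^sub>v shift_vec x) $ i = (\<Sum>j<m. t (int i - int j) * x $ Suc j)"
    using x i unfolding n
    by (simp add: mult_mat_vec_def scalar_prod_def shift_vec_def atLeast0LessThan sum.lessThan_Suc)
  also have "\<dots> = (\<Sum>k<n. (if k = 0 then 0 else t (int (Suc i) - int k)) * x $ k)"
    unfolding n sum.lessThan_Suc_shift by simp
  also have "\<dots> = (if Suc i < n then (toeplitz n t *\<^sub>v x) $ Suc i else V_plus n t \<bullet> x)"
  proof (cases "Suc i < n")
    case True
    then show ?thesis using x x0
      by (auto simp: mult_mat_vec_def scalar_prod_def atLeast0LessThan intro!: sum.cong)
  next
    case False
    then have "n = Suc i" using i by simp
    then show ?thesis using x
      by (auto simp: scalar_prod_def V_plus_def atLeast0LessThan intro!: sum.cong)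
  qed
  finally show ?thesis .
qed

lemma V_plus_scalar_prod_nonzero:
  fixes t :: "int \<Rightarrow> 'a :: idom"
  assumes n: "0 < n" and det: "det (toeplitz n t) \<noteq> 0" and x: "x \<in> carrier_vec n"
    and Tx: "toeplitz n t *\<^sub>v x = unit_vec n 0" and x0: "x $ 0 = 0"
  shows "V_plus n t \<bullet> x \<noteq> 0"
proof
  assume "V_plus n t \<bullet> x = 0"
  then have "toeplitz n t *\<^sub>v shift_vec x = 0\<^sub>v n"
    using toeplitz_mult_shift_vec[OF x x0] Tx x by (intro eq_vecI) (auto simp: shift_vec_def)
  moreover have "shift_vec x \<in> carrier_vec n" using x by (simp add: shift_vec_def)
  ultimately have shift0: "shift_vec x = 0\<^sub>v n"
    using det det_0_iff_vec_prod_zero[OF toeplitz_carrier_mat] by blast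
  have "x $ Suc j = 0" if "Suc j < n" for j
    using arg_cong[OF shift0, of "\<lambda>v. v $ j"] that x by (simp add: shift_vec_def)
  then have "x $ i = 0" if "i < n" for i
    using x0 that by (cases i) auto
  then have "x = 0\<^sub>v n" using x by (intro eq_vecI) auto
  then have "(toeplitz n t *\<^sub>v x) $ 0 = 0" using n by simp
  then show False using Tx n by simp
qed

lemma toeplitz_inverse_V_plus_nonzero:
  fixes t :: "int \<Rightarrow> 'a :: idom"
  assumes n: "0 < n" and Tinv: "Tinv \<in> carrier_mat n n"
    and right_inv: "toeplitz n t * Tinv = 1\<^sub>m n" and left_inv: "Tinv * toeplitz n t = 1\<^sub>m n"
    and corner: "Tinv $$ (0, 0) = 0"
  shows "V_plus n t \<bullet> (Tinv *\<^sub>v unit_vec n 0) \<noteq> 0"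
proof (rule V_plus_scalar_prod_nonzero[OF n])
  show "det (toeplitz n t) \<noteq> 0"
    by (rule left_inverse_imp_det_non_zero[OF toeplitz_carrier_mat Tinv left_inv])
  show "toeplitz n t *\<^sub>v (Tinv *\<^sub>v unit_vec n 0) = unit_vec n 0"
    using assoc_mult_mat_vec[OF toeplitz_carrier_mat Tinv unit_vec_carrier, of t 0] right_inv by simp
qed (use n Tinv corner in auto)

lemma toeplitz_inverse_V_minus_nonzero:
  fixes t :: "int \<Rightarrow> 'a :: idom"
  assumes n: "0 < n" and Tinv: "Tinv \<in> carrier_mat n n"
    and right_inv: "toeplitz n t * Tinv = 1\<^sub>m n" and left_inv: "Tinv * toeplitz n t = 1\<^sub>m n"
    and corner: "Tinv $$ (0, 0) = 0"
  shows "unit_vec n 0 \<bullet> (Tinv *\<^sub>v V_minus n t) \<noteq> 0"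
proof -
  let ?s = "\<lambda>k. t (- k)"
  have "unit_vec n 0 \<bullet> (Tinv *\<^sub>v V_minus n t) = V_plus n ?s \<bullet> (transpose_mat Tinv *\<^sub>v unit_vec n 0)"
    using transpose_vec_mult_scalar[OF Tinv V_minus_carrier_vec unit_vec_carrier] Tinv
      comm_scalar_prod[OF V_minus_carrier_vec, of "transpose_mat Tinv *\<^sub>v unit_vec n 0"]
    by (simp add: V_minus_eq_V_plus)
  moreover have "V_plus n ?s \<bullet> (transpose_mat Tinv *\<^sub>v unit_vec n 0) \<noteq> 0"
  proof (rule toeplitz_inverse_V_plus_nonzero[OF n])
    show "toeplitz n ?s * transpose_mat Tinv = 1\<^sub>m n"
      using arg_cong[OF left_inv, of transpose_mat] Tinv
      by (simp add: transpose_mult[OF Tinv toeplitz_carrier_mat] transpose_toeplitz)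
    show "transpose_mat Tinv * toeplitz n ?s = 1\<^sub>m n"
      using arg_cong[OF right_inv, of transpose_mat] Tinv
      by (simp add: transpose_mult[OF toeplitz_carrier_mat Tinv] transpose_toeplitz)
  qed (use n Tinv corner in auto)
  ultimately show ?thesis by simp
qed

lemma bordered_toeplitz_four_block:
  fixes t :: "int \<Rightarrow> 'a :: semiring_1"
  assumes "0 < d"
  shows "bordered_toeplitz d t \<gamma> \<delta> = four_block_mat (toeplitz d t)
    (mat_of_cols d [\<gamma> \<cdot>\<^sub>v unit_vec d 0 + V_minus d t])
    (mat_of_rows d [\<delta> \<cdot>\<^sub>v unit_vec d 0 + V_plus d t]) (mat 1 1 (\<lambda>_. t 0))"
    (is "_ = ?M")
proof (rule eq_matI)
  fix i j assume "i < dim_row ?M" "j < dim_col ?M"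
  then consider "i < d" "j < d" | "i < d" "j = d" | "i = d" "j < d" | "i = d" "j = d"
    by fastforce
  then show "bordered_toeplitz d t \<gamma> \<delta> $$ (i, j) = ?M $$ (i, j)"
    using assms
    by cases (auto simp: bordered_toeplitz_def V_minus_def V_plus_def mat_of_cols_index mat_of_rows_index)
qed (simp_all add: bordered_toeplitz_def)

lemma det_bordered_toeplitz:
  fixes t :: "int \<Rightarrow> 'a :: field"
  assumes d: "0 < d" and Tinv: "Tinv \<in> carrier_mat d d" and inv: "toeplitz d t * Tinv = 1\<^sub>m d"
  shows "det (bordered_toeplitz d t \<gamma> \<delta>) = - det (toeplitz d t) *
    (\<gamma> * \<delta> * Tinv $$ (0, 0)
     + \<gamma> * (V_plus d t \<bullet> (Tinv *\<^sub>v unit_vec d 0))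
     + \<delta> * (unit_vec d 0 \<bullet> (Tinv *\<^sub>v V_minus d t))
     + V_plus d t \<bullet> (Tinv *\<^sub>v V_minus d t)
     - t 0)"
proof -
  let ?e = "unit_vec d 0"
  let ?u = "\<gamma> \<cdot>\<^sub>v ?e + V_minus d t" and ?w = "\<delta> \<cdot>\<^sub>v ?e + V_plus d t"
  have "det (bordered_toeplitz d t \<gamma> \<delta>) = det (toeplitz d t) * (t 0 - ?w \<bullet> (Tinv *\<^sub>v ?u))"
    unfolding bordered_toeplitz_four_block[OF d]
    by (rule det_bordered_mat[OF toeplitz_carrier_mat Tinv inv]) simp_all
  also have "?w \<bullet> (Tinv *\<^sub>v ?u) = \<gamma> * \<delta> * Tinv $$ (0, 0)
     + \<gamma> * (V_plus d t \<bullet> (Tinv *\<^sub>v ?e)) + \<delta> * (?e \<bullet> (Tinv *\<^sub>v V_minus d t))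
     + V_plus d t \<bullet> (Tinv *\<^sub>v V_minus d t)"
    using Tinv d
    by (simp add: mult_add_distrib_mat_vec[OF Tinv] mult_mat_vec[OF Tinv]
        add_scalar_prod_distrib[of _ d] scalar_prod_add_distrib[of _ d] algebra_simps)
  finally show ?thesis by (simp add: algebra_simps)
qed

theorem proposition14:
  fixes d :: nat and t :: "int \<Rightarrow> complex" and \<gamma> \<delta> :: complex
    and Tinv :: "complex mat"
  assumes "d \<ge> 2"
    and "invertible_mat (toeplitz d t)"
    and "det (toeplitz (d - 1) t) = 0"
    and "Tinv \<in> carrier_mat d d"
    and "inverts_mat (toeplitz d t) Tinv" and "inverts_mat Tinv (toeplitz d t)"
  shows "(det (bordered_toeplitz d t \<gamma> \<delta>) =
           - det (toeplitz d t) *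
             (\<gamma> * (V_plus d t \<bullet> (Tinv *\<^sub>v unit_vec d 0))
              + \<delta> * (unit_vec d 0 \<bullet> (Tinv *\<^sub>v V_minus d t))
              + V_plus d t \<bullet> (Tinv *\<^sub>v V_minus d t)
              - t 0))
    \<and> (V_plus d t \<bullet> (Tinv *\<^sub>v unit_vec d 0) \<noteq> 0)
    \<and> (unit_vec d 0 \<bullet> (Tinv *\<^sub>v V_minus d t) \<noteq> 0)"
proof -
  obtain m where d: "d = Suc m" using assms(1) by (cases d) auto
  have right_inv: "toeplitz d t * Tinv = 1\<^sub>m d" and left_inv: "Tinv * toeplitz d t = 1\<^sub>m d"
    using assms(4-6) by (simp_all add: inverts_mat_def)
  have "det (toeplitz d t) \<noteq> 0"
    by (rule left_inverse_imp_det_non_zero[OF toeplitz_carrier_mat assms(4) left_inv])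
  then have corner: "Tinv $$ (0, 0) = 0"
    using toeplitz_inverse_corner[of Tinv m t] assms(3,4) left_inv unfolding d by simp
  show ?thesis
    using det_bordered_toeplitz[OF _ assms(4) right_inv, of \<gamma> \<delta>] corner d
      toeplitz_inverse_V_plus_nonzero[OF _ assms(4) right_inv left_inv corner]
      toeplitz_inverse_V_minus_nonzero[OF _ assms(4) right_inv left_inv corner]
    by simp
qed

end
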